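(* Let $B$ be a Poisson algebra over a field $k$ of characteristic zero, $\alpha$ a Poisson derivation of $B$, and $A=B[x^{\pm1};\alpha]_p$. Assume that $\alpha$ extends to a derivation $\hat\alpha$ of $A$ with $\hat\alpha(x)=sx$ for some nonzero $s\in k$. Then every $\hat\alpha$-stable Poisson prime ideal of $A$ is induced from a Poisson prime ideal of $B$, i.e. has the form $QA=Q[x^{\pm1}]$ for a Poisson prime ideal $Q$ of $B$.
   Context: A Poisson derivation of a Poisson algebra $B$ is a $k$-linear map that is a derivation for both the multiplication and the Poisson bracket. $B[x^{\pm1};\alpha]_p$ denotes the Laurent polynomial ring $B[x^{\pm1}]$ with the unique Poisson bracket extending that of $B$ and satisfying $\{x,b\}=\alpha(b)x$ for $b\in B$. A Poisson prime ideal is a prime ideal $P$ with $\{A,P\}\subseteq P$. *)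

theory Defs
  imports Main "HOL-Library.Poly_Mapping"
begin

(* A k-algebra structure on a commutative ring 'r is a unital ring homomorphism k -> 'r. *)
definition k_alg_hom :: "('k::field \<Rightarrow> 'r::comm_ring_1) \<Rightarrow> bool" where
  "k_alg_hom \<iota> \<longleftrightarrow> \<iota> 1 = 1 \<and> (\<forall>c d. \<iota> (c + d) = \<iota> c + \<iota> d) \<and> (\<forall>c d. \<iota> (c * d) = \<iota> c * \<iota> d)"

definition k_linear :: "('k::field \<Rightarrow> 'r::comm_ring_1) \<Rightarrow> ('r \<Rightarrow> 'r) \<Rightarrow> bool" where
  "k_linear \<iota> f \<longleftrightarrow> (\<forall>a b. f (a + b) = f a + f b) \<and> (\<forall>c a. f (\<iota> c * a) = \<iota> c * f a)"

definition poisson_algebra :: "('k::field \<Rightarrow> 'r::comm_ring_1) \<Rightarrow> ('r \<Rightarrow> 'r \<Rightarrow> 'r) \<Rightarrow> bool" where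
  "poisson_algebra \<iota> br \<longleftrightarrow> k_alg_hom \<iota>
     \<and> (\<forall>a. k_linear \<iota> (\<lambda>b. br a b)) \<and> (\<forall>b. k_linear \<iota> (\<lambda>a. br a b))
     \<and> (\<forall>a. br a a = 0)
     \<and> (\<forall>a b c. br a (br b c) + br b (br c a) + br c (br a b) = 0)
     \<and> (\<forall>a b c. br a (b * c) = br a b * c + b * br a c)"

definition k_derivation :: "('k::field \<Rightarrow> 'r::comm_ring_1) \<Rightarrow> ('r \<Rightarrow> 'r) \<Rightarrow> bool" where
  "k_derivation \<iota> d \<longleftrightarrow> k_linear \<iota> d \<and> (\<forall>a b. d (a * b) = d a * b + a * d b)"

definition poisson_derivation :: "('k::field \<Rightarrow> 'r::comm_ring_1) \<Rightarrow> ('r \<Rightarrow> 'r \<Rightarrow> 'r) \<Rightarrow> ('r \<Rightarrow> 'r) \<Rightarrow> bool" where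
  "poisson_derivation \<iota> br d \<longleftrightarrow> k_derivation \<iota> d \<and> (\<forall>a b. d (br a b) = br (d a) b + br a (d b))"

definition is_ideal :: "'r::comm_ring_1 set \<Rightarrow> bool" where
  "is_ideal I \<longleftrightarrow> 0 \<in> I \<and> (\<forall>a\<in>I. \<forall>b\<in>I. a + b \<in> I) \<and> (\<forall>r. \<forall>a\<in>I. r * a \<in> I)"

definition prime_ideal :: "'r::comm_ring_1 set \<Rightarrow> bool" where
  "prime_ideal P \<longleftrightarrow> is_ideal P \<and> P \<noteq> UNIV \<and> (\<forall>a b. a * b \<in> P \<longrightarrow> a \<in> P \<or> b \<in> P)"

definition poisson_prime_ideal :: "('r::comm_ring_1 \<Rightarrow> 'r \<Rightarrow> 'r) \<Rightarrow> 'r set \<Rightarrow> bool" where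
  "poisson_prime_ideal br P \<longleftrightarrow> prime_ideal P \<and> (\<forall>a. \<forall>p\<in>P. br a p \<in> P)"

(* Laurent polynomials B[x^{\<pm>1}] are represented as finitely supported maps int \<Rightarrow>\<^sub>0 B *)
definition lconst :: "'b::comm_ring_1 \<Rightarrow> (int \<Rightarrow>\<^sub>0 'b)" where
  "lconst b = Poly_Mapping.single 0 b"

definition lvar :: "int \<Rightarrow>\<^sub>0 'b::comm_ring_1" where
  "lvar = Poly_Mapping.single 1 1"

(* Q[x^{\<pm>1}] = QA: Laurent polynomials all of whose coefficients lie in Q *)
definition laurent_ext :: "'b::comm_ring_1 set \<Rightarrow> (int \<Rightarrow>\<^sub>0 'b) set" where
  "laurent_ext Q = {f. \<forall>n. Poly_Mapping.lookup f n \<in> Q}"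

end

theory Submission
  imports Defs
begin

text \<open>
  The operator \<open>D = \<alpha>h - x\<^sup>-\<^sup>1{x,-}\<close> is a derivation that vanishes on \<open>B\<close>
  (because \<open>{x,b} = \<alpha>(b)x\<close>) and sends \<open>x\<close> to \<open>sx\<close>; hence it multiplies
  \<open>bx\<^sup>n\<close> by \<open>ns\<close>. An \<open>\<alpha>h\<close>-stable Poisson ideal is \<open>D\<close>-stable, and since the
  eigenvalues \<open>ns\<close> are pairwise distinct units of \<open>k\<close>, subtracting \<open>ms\<close> times an element
  kills its degree-\<open>m\<close> term; induction on the support then shows that the ideal contains
  all homogeneous components of its elements. As \<open>x\<close> is a unit, such an ideal is
  \<open>Q[x\<^sup>\<plusminus>\<^sup>1]\<close> for its contraction \<open>Q\<close>, which is a Poisson prime of \<open>B\<close>.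
\<close>

lemma poly_mapping_single_add_induct [case_names zero single_add]:
  assumes "P 0"
    and "\<And>f a b. a \<notin> Poly_Mapping.keys f \<Longrightarrow> b \<noteq> 0 \<Longrightarrow> P f \<Longrightarrow> P (Poly_Mapping.single a b + f)"
  shows "P f"
proof (induction f rule: update_induct)
  case const
  show ?case by (rule assms(1))
next
  case (update f a b)
  have "Poly_Mapping.update a b f = Poly_Mapping.single a b + f"
    using update.hyps(1)
    by (intro poly_mapping_eqI) (auto simp: lookup_update lookup_add lookup_single in_keys_iff when_def)
  with assms(2) update show ?case by simp
qed

lemma lookup_single_zero_mult:
  "Poly_Mapping.lookup (Poly_Mapping.single 0 c * f) n = c * Poly_Mapping.lookup f n"
  for f :: "'a::comm_monoid_add \<Rightarrow>\<^sub>0 'b::comm_ring_1"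
  by (simp add: mult_map_scale_conv_mult[symmetric] map.rep_eq when_def)

lemma lookup_diagonal_additive:
  fixes D :: "('a \<Rightarrow>\<^sub>0 'b::ring) \<Rightarrow> ('a \<Rightarrow>\<^sub>0 'b)"
  assumes add: "\<And>f g. D (f + g) = D f + D g"
    and single: "\<And>n b. D (Poly_Mapping.single n b) = Poly_Mapping.single n (w n * b)"
  shows "Poly_Mapping.lookup (D f) n = w n * Poly_Mapping.lookup f n"
proof (induction f rule: poly_mapping_single_add_induct)
  case zero
  have "D 0 = 0" using add[of 0 0] by simp
  then show ?case by simp
next
  case (single_add f a b)
  then show ?case
    by (simp add: add single lookup_add lookup_single when_def distrib_left)
qed

lemma is_ideal_diff: "is_ideal I \<Longrightarrow> a \<in> I \<Longrightarrow> b \<in> I \<Longrightarrow> a - b \<in> I"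
  unfolding is_ideal_def by (metis diff_conv_add_uminus mult_minus1)

lemma k_alg_hom_dvd_one:
  assumes "k_alg_hom \<iota>" and "c \<noteq> 0"
  shows "\<iota> c dvd 1"
proof (rule dvdI)
  show "1 = \<iota> c * \<iota> (inverse c)"
    using assms by (metis k_alg_hom_def right_inverse)
qed

lemma k_alg_hom_of_int:
  assumes "k_alg_hom \<iota>"
  shows "\<iota> (of_int n) = of_int n"
proof -
  have add: "\<iota> (a + b) = \<iota> a + \<iota> b" for a b using assms by (simp add: k_alg_hom_def)
  have diff: "\<iota> (a - b) = \<iota> a - \<iota> b" for a b by (metis add add_diff_cancel diff_add_cancel)
  show ?thesis
    using assms by (induction n rule: int_induct[where k=0]) (simp_all add: k_alg_hom_def add diff diff[of 0 0, simplified])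
qed

lemma single_lookup_mem_ideal_if_diagonal:
  fixes I :: "('a::comm_monoid_add \<Rightarrow>\<^sub>0 'b::comm_ring_1) set"
  assumes I: "is_ideal I"
    and D_closed: "\<And>f. f \<in> I \<Longrightarrow> D f \<in> I"
    and D_lookup: "\<And>f n. Poly_Mapping.lookup (D f) n = w n * Poly_Mapping.lookup f n"
    and w_separates: "\<And>m n. m \<noteq> n \<Longrightarrow> w m - w n dvd 1"
    and "f \<in> I"
  shows "Poly_Mapping.single n (Poly_Mapping.lookup f n) \<in> I"
  using \<open>f \<in> I\<close>
proof (induction "card (Poly_Mapping.keys f)" arbitrary: f rule: less_induct)
  case less
  show ?case
  proof (cases "Poly_Mapping.keys f \<subseteq> {n}")
    case True
    then have "f = Poly_Mapping.single n (Poly_Mapping.lookup f n)"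
      by (intro poly_mapping_eqI) (auto simp: lookup_single when_def in_keys_iff)
    with less.prems show ?thesis by simp
  next
    case False
    then obtain m where m: "m \<in> Poly_Mapping.keys f" "m \<noteq> n" by blast
    define g where "g = D f - Poly_Mapping.single 0 (w m) * f"
    have g_lookup: "Poly_Mapping.lookup g k = (w k - w m) * Poly_Mapping.lookup f k" for k
      by (simp add: g_def lookup_minus D_lookup lookup_single_zero_mult left_diff_distrib)
    have "g \<in> I"
      unfolding g_def using I less.prems D_closed by (metis is_ideal_def is_ideal_diff)
    have "Poly_Mapping.keys g \<subseteq> Poly_Mapping.keys f - {m}"
      by (auto simp: in_keys_iff g_lookup)
    then have "card (Poly_Mapping.keys g) < card (Poly_Mapping.keys f)"
      using m(1) by (meson card_Diff1_less card_mono finite_Diff finite_keys le_less_trans)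
    then have "Poly_Mapping.single n (Poly_Mapping.lookup g n) \<in> I"
      using less.hyps \<open>g \<in> I\<close> by blast
    moreover obtain u where u: "1 = (w n - w m) * u"
      using w_separates[of n m] m(2) by (metis dvdE)
    ultimately have "Poly_Mapping.single 0 u * Poly_Mapping.single n (Poly_Mapping.lookup g n) \<in> I"
      using I by (simp add: is_ideal_def)
    also have "Poly_Mapping.single 0 u * Poly_Mapping.single n (Poly_Mapping.lookup g n)
        = Poly_Mapping.single n (Poly_Mapping.lookup f n)"
      by (simp add: mult_single g_lookup mult.assoc[symmetric] u[symmetric] mult.commute[of u])
    finally show ?thesis .
  qed
qed

lemma laurent_derivation_single:
  fixes d :: "(int \<Rightarrow>\<^sub>0 'b::comm_ring_1) \<Rightarrow> (int \<Rightarrow>\<^sub>0 'b)"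
  assumes leibniz: "\<And>f g. d (f * g) = d f * g + f * d g"
    and d_lvar: "d lvar = lconst c * lvar"
  shows "d (Poly_Mapping.single n 1) = Poly_Mapping.single n (of_int n * c)"
proof -
  have "d 1 = 0"
    using leibniz[of 1 1] by simp
  have d_inverse: "d (Poly_Mapping.single (-1) 1) = Poly_Mapping.single (-1) (- c)"
  proof -
    have "0 = d (lvar * Poly_Mapping.single (-1) 1)"
      using \<open>d 1 = 0\<close> by (simp add: lvar_def mult_single)
    also have "\<dots> = Poly_Mapping.single 0 c + lvar * d (Poly_Mapping.single (-1) 1)"
      unfolding leibniz d_lvar by (simp add: lconst_def lvar_def mult_single mult.assoc)
    finally have "Poly_Mapping.single (-1) 1 * (Poly_Mapping.single 0 c + lvar * d (Poly_Mapping.single (-1) 1)) = 0"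
      by simp
    then show ?thesis
      by (simp add: distrib_left mult.assoc[symmetric] lvar_def mult_single single_uminus
          eq_neg_iff_add_eq_0 add.commute)
  qed
  show ?thesis
  proof (induction n rule: int_induct[where k=0])
    case base
    show ?case using \<open>d 1 = 0\<close> by simp
  next
    case (step1 i)
    have split: "Poly_Mapping.single (i + 1) 1 = lvar * Poly_Mapping.single i (1::'b)"
      by (simp add: lvar_def mult_single add.commute)
    show ?case
      unfolding split leibniz d_lvar step1 by (simp add: lconst_def lvar_def mult_single single_add[symmetric] algebra_simps)
  next
    case (step2 i)
    have split: "Poly_Mapping.single (i - 1) 1 = Poly_Mapping.single (-1) 1 * Poly_Mapping.single i (1::'b)"
      by (simp add: mult_single)
    show ?case
      unfolding split leibniz d_inverse step2 by (simp add: mult_single single_add[symmetric] algebra_simps)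
  qed
qed

lemma lookup_laurent_euler_derivation:
  fixes d \<delta> :: "(int \<Rightarrow>\<^sub>0 'b::comm_ring_1) \<Rightarrow> (int \<Rightarrow>\<^sub>0 'b)"
  assumes d_add: "\<And>f g. d (f + g) = d f + d g"
    and d_leibniz: "\<And>f g. d (f * g) = d f * g + f * d g"
    and \<delta>_add: "\<And>f g. \<delta> (f + g) = \<delta> f + \<delta> g"
    and \<delta>_leibniz: "\<And>f g. \<delta> (f * g) = \<delta> f * g + f * \<delta> g"
    and d_lconst: "\<And>b. d (lconst b) = lconst (\<alpha> b)"
    and d_lvar: "d lvar = lconst c * lvar"
    and \<delta>_lconst: "\<And>b. \<delta> (lconst b) = lconst (\<alpha> b) * lvar"
    and \<delta>_lvar: "\<delta> lvar = 0"
  shows "Poly_Mapping.lookup (d f - Poly_Mapping.single (-1) 1 * \<delta> f) n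
    = of_int n * c * Poly_Mapping.lookup f n"
proof (rule lookup_diagonal_additive)
  show "d (f + g) - Poly_Mapping.single (-1) 1 * \<delta> (f + g)
      = (d f - Poly_Mapping.single (-1) 1 * \<delta> f) + (d g - Poly_Mapping.single (-1) 1 * \<delta> g)" for f g
    by (simp add: d_add \<delta>_add algebra_simps)
  have \<delta>_single: "\<delta> (Poly_Mapping.single n 1) = 0" for n
    using laurent_derivation_single[of \<delta> 0 n] \<delta>_leibniz \<delta>_lvar by (simp add: lconst_def)
  show "d (Poly_Mapping.single n b) - Poly_Mapping.single (-1) 1 * \<delta> (Poly_Mapping.single n b)
      = Poly_Mapping.single n (of_int n * c * b)" for n b
  proof -
    have split: "Poly_Mapping.single n b = lconst b * Poly_Mapping.single n 1"
      by (simp add: lconst_def mult_single)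
    show ?thesis
      unfolding split d_leibniz \<delta>_leibniz d_lconst \<delta>_lconst \<delta>_single
        laurent_derivation_single[of d, OF d_leibniz d_lvar]
      by (simp add: lconst_def lvar_def mult_single algebra_simps)
  qed
qed

lemma poisson_prime_ideal_vimage:
  fixes \<phi> :: "'b::comm_ring_1 \<Rightarrow> 'c::comm_ring_1"
  assumes \<phi>_one: "\<phi> 1 = 1"
    and \<phi>_add: "\<And>a b. \<phi> (a + b) = \<phi> a + \<phi> b"
    and \<phi>_mult: "\<And>a b. \<phi> (a * b) = \<phi> a * \<phi> b"
    and \<phi>_bracket: "\<And>a b. brC (\<phi> a) (\<phi> b) = \<phi> (brB a b)"
    and P: "poisson_prime_ideal brC P"
  shows "poisson_prime_ideal brB (\<phi> -` P)"
proof -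
  have "\<phi> 0 = 0"
    using \<phi>_add[of 0 0] by simp
  moreover have "\<phi> -` P \<noteq> UNIV"
  proof
    assume "\<phi> -` P = UNIV"
    then have "1 \<in> P" using \<phi>_one by (metis UNIV_I vimageE)
    then have "P = UNIV"
      using P by (metis UNIV_eq_I mult.right_neutral poisson_prime_ideal_def prime_ideal_def is_ideal_def)
    with P show False by (simp add: poisson_prime_ideal_def prime_ideal_def)
  qed
  ultimately show ?thesis
    using P by (auto simp: poisson_prime_ideal_def prime_ideal_def is_ideal_def
        \<phi>_add \<phi>_mult \<phi>_bracket[symmetric])
qed

lemma laurent_ideal_eq_laurent_ext:
  fixes I :: "(int \<Rightarrow>\<^sub>0 'b::comm_ring_1) set"
  assumes I: "is_ideal I"
    and homogeneous: "\<And>f n. f \<in> I \<Longrightarrow> Poly_Mapping.single n (Poly_Mapping.lookup f n) \<in> I"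
  shows "I = laurent_ext (lconst -` I)"
proof
  have "lconst (Poly_Mapping.lookup f n) \<in> I" if "f \<in> I" for f n
  proof -
    have "Poly_Mapping.single (- n) 1 * Poly_Mapping.single n (Poly_Mapping.lookup f n) \<in> I"
      using I homogeneous[OF that] by (simp add: is_ideal_def)
    then show ?thesis by (simp add: lconst_def mult_single)
  qed
  then show "I \<subseteq> laurent_ext (lconst -` I)"
    by (auto simp: laurent_ext_def)
next
  have "(\<forall>n. lconst (Poly_Mapping.lookup f n) \<in> I) \<longrightarrow> f \<in> I" for f
  proof (induction f rule: poly_mapping_single_add_induct)
    case zero
    show ?case using I by (simp add: is_ideal_def)
  next
    case (single_add f a b)
    show ?case
    proof
      assume coeffs: "\<forall>n. lconst (Poly_Mapping.lookup (Poly_Mapping.single a b + f) n) \<in> I"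
      have "Poly_Mapping.lookup f a = 0"
        using single_add.hyps(1) by (simp add: in_keys_iff)
      then have "lconst b \<in> I"
        using coeffs[rule_format, of a] by (simp add: lookup_add)
      then have "Poly_Mapping.single a 1 * lconst b \<in> I"
        using I by (simp add: is_ideal_def)
      moreover have "lconst (Poly_Mapping.lookup f n) \<in> I" for n
        using coeffs[rule_format, of n] \<open>Poly_Mapping.lookup f a = 0\<close> I
        by (cases "n = a") (auto simp: lookup_add lookup_single is_ideal_def lconst_def)
      then have "f \<in> I"
        using single_add.IH by blast
      ultimately show "Poly_Mapping.single a b + f \<in> I"
        using I by (simp add: is_ideal_def lconst_def mult_single)
    qed
  qed
  then show "laurent_ext (lconst -` I) \<subseteq> I"
    by (auto simp: laurent_ext_def)
qed

theorem lemma1p2: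
  fixes \<iota> :: "'k::field_char_0 \<Rightarrow> 'b::comm_ring_1"
    and brB :: "'b \<Rightarrow> 'b \<Rightarrow> 'b"
    and \<alpha> :: "'b \<Rightarrow> 'b"
    and brA :: "(int \<Rightarrow>\<^sub>0 'b) \<Rightarrow> (int \<Rightarrow>\<^sub>0 'b) \<Rightarrow> (int \<Rightarrow>\<^sub>0 'b)"
    and \<alpha>h :: "(int \<Rightarrow>\<^sub>0 'b) \<Rightarrow> (int \<Rightarrow>\<^sub>0 'b)"
    and s :: 'k
    and P :: "(int \<Rightarrow>\<^sub>0 'b) set"
  assumes B: "poisson_algebra \<iota> brB"
    and alpha: "poisson_derivation \<iota> brB \<alpha>"
    and A: "poisson_algebra (\<lambda>c. lconst (\<iota> c)) brA"
    and A_ext: "\<And>a b. brA (lconst a) (lconst b) = lconst (brB a b)"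
    and A_x: "\<And>b. brA lvar (lconst b) = lconst (\<alpha> b) * lvar"
    and ah: "k_derivation (\<lambda>c. lconst (\<iota> c)) \<alpha>h"
    and ah_ext: "\<And>b. \<alpha>h (lconst b) = lconst (\<alpha> b)"
    and ah_x: "\<alpha>h lvar = lconst (\<iota> s) * lvar"
    and s: "s \<noteq> 0"
    and P: "poisson_prime_ideal brA P"
    and P_stable: "\<alpha>h ` P \<subseteq> P"
  shows "\<exists>Q. poisson_prime_ideal brB Q \<and> P = laurent_ext Q"
proof -
  \<comment> \<open>\<open>alpha\<close> only guarantees that \<open>brA\<close> exists.\<close>
  have \<iota>: "k_alg_hom \<iota>"
    using B by (simp add: poisson_algebra_def)
  have ah_add: "\<alpha>h (f + g) = \<alpha>h f + \<alpha>h g" and ah_leibniz: "\<alpha>h (f * g) = \<alpha>h f * g + f * \<alpha>h g" for f g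
    using ah by (simp_all add: k_derivation_def k_linear_def)
  have x_add: "brA lvar (f + g) = brA lvar f + brA lvar g"
    and x_leibniz: "brA lvar (f * g) = brA lvar f * g + f * brA lvar g"
    and x_x: "brA lvar lvar = 0" for f g
    using A by (simp_all add: poisson_algebra_def k_linear_def)
  have P_ideal: "is_ideal P"
    using P by (simp add: poisson_prime_ideal_def prime_ideal_def)
  define D where "D f = \<alpha>h f - Poly_Mapping.single (-1) 1 * brA lvar f" for f
  have D_lookup: "Poly_Mapping.lookup (D f) n = of_int n * \<iota> s * Poly_Mapping.lookup f n" for f n
    unfolding D_def
    by (rule lookup_laurent_euler_derivation[OF ah_add ah_leibniz x_add x_leibniz ah_ext ah_x A_x x_x])
  have D_closed: "D f \<in> P" if "f \<in> P" for f
    using that P_stable P P_ideal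
    by (auto simp: D_def poisson_prime_ideal_def is_ideal_def intro!: is_ideal_diff)
  have weights_separate: "of_int m * \<iota> s - of_int n * \<iota> s dvd 1" if "m \<noteq> n" for m n :: int
  proof -
    have "\<iota> (of_int (m - n) * s) = \<iota> (of_int (m - n)) * \<iota> s"
      using \<iota> by (simp add: k_alg_hom_def)
    also have "\<dots> = of_int m * \<iota> s - of_int n * \<iota> s"
      by (simp only: k_alg_hom_of_int[OF \<iota>]) (simp add: left_diff_distrib)
    finally show ?thesis
      using that s k_alg_hom_dvd_one[OF \<iota>, of "of_int (m - n) * s"] by simp
  qed
  have "P = laurent_ext (lconst -` P)"
    using single_lookup_mem_ideal_if_diagonal[OF P_ideal D_closed D_lookup weights_separate]
    by (intro laurent_ideal_eq_laurent_ext[OF P_ideal]) blast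
  moreover have "poisson_prime_ideal brB (lconst -` P)"
    by (rule poisson_prime_ideal_vimage[where \<phi> = lconst, OF _ _ _ A_ext P])
      (simp_all add: lconst_def single_add mult_single)
  ultimately show ?thesis by blast
qed

end
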